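(* Let $M\ge1$, $\beta,\hat\beta>0$, and suppose $$\beta^{-1}<1+(M-1)\,m_0(\hat\beta)^2 .$$ Then $\mathbf{p}=\mathbf{0}$ is not a global maximizer of $$g(\mathbf{p};\hat\beta,\beta)=\log2-\frac{\beta|\mathbf{p}|^2}{2}+\big\langle\log\cosh(\beta\,\mathbf{s}\cdot\mathbf{p})\big\rangle_{\mathbf{s},\hat\beta},\qquad\mathbf{p}\in\mathbb{R}^M,$$ the scalar equation $p=\big\langle s_1\tanh\big(\beta p\sum_{\mu=1}^M s_\mu\big)\big\rangle_{\mathbf{s},\hat\beta}$ has exactly one solution $\bar p>0$, and $\mathbf{p}=\pm\bar p\,\mathbf{1}$ are solutions of $\mathbf{p}=\langle\mathbf{s}\tanh(\beta\,\mathbf{s}\cdot\mathbf{p})\rangle_{\mathbf{s},\hat\beta}$.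
   Context: $m_0(\hat\beta)$ is the largest nonnegative solution of $m=\tanh(\hat\beta m)$. $\langle\cdot\rangle_{\mathbf{s},\hat\beta}$ denotes expectation over $\mathbf{s}=(s_1,\dots,s_M)\in\{-1,1\}^M$ with i.i.d. entries of mean $m_0(\hat\beta)$. *)

theory Defs
  imports "HOL-Analysis.Analysis" "HOL-Library.FuncSet"
begin

definition m0 :: "real \<Rightarrow> real" where
  "m0 bh = (GREATEST m. m \<ge> 0 \<and> m = tanh (bh * m))"

definition spins :: "nat \<Rightarrow> (nat \<Rightarrow> real) set" where
  "spins M = PiE {..<M} (\<lambda>_. {-1, 1})"

text \<open>Expectation over s with i.i.d. entries of mean m0(bh):
  P(s_mu = x) = (1 + m0 bh * x)/2 for x in {-1,1}.\<close>
definition avg :: "nat \<Rightarrow> real \<Rightarrow> ((nat \<Rightarrow> real) \<Rightarrow> real) \<Rightarrow> real" where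
  "avg M bh f = (\<Sum>s\<in>spins M. (\<Prod>\<mu><M. (1 + m0 bh * s \<mu>) / 2) * f s)"

definition gfun :: "nat \<Rightarrow> real \<Rightarrow> real \<Rightarrow> (nat \<Rightarrow> real) \<Rightarrow> real" where
  "gfun M bh b p = ln 2 - b * (\<Sum>\<mu><M. (p \<mu>)^2) / 2
     + avg M bh (\<lambda>s. ln (cosh (b * (\<Sum>\<mu><M. s \<mu> * p \<mu>))))"

end

theory Submission
  imports Defs "HOL-Combinatorics.Permutations"
begin

text \<open>
  Write \<open>F p = \<langle>s\<^sub>1 tanh (\<beta> p S)\<rangle>\<close> with \<open>S = s\<^sub>1 + \<dots> + s\<^sub>M\<close>. The spins are
  exchangeable, so \<open>\<langle>s\<^sub>\<mu> f S\<rangle> = \<langle>s\<^sub>1 f S\<rangle>\<close> for every \<open>\<mu>\<close>; this gives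
  \<open>\<langle>S f S\<rangle> = M \<langle>s\<^sub>1 f S\<rangle>\<close>, reduces the vector equation at \<open>\<plusminus>p \<one>\<close> to the scalar one
  (tanh is odd), and shows that along the diagonal \<open>t \<one>\<close> the derivative of \<open>g\<close> is
  \<open>\<beta> M (F t - t)\<close>. Since \<open>F 0 = 0\<close> and \<open>F' 0 = \<beta> \<langle>s\<^sub>1 S\<rangle> = \<beta> (1 + (M - 1) m\<^sub>0\<^sup>2) > 1\<close>,
  \<open>F t > t\<close> for small \<open>t > 0\<close>: hence \<open>g\<close> increases along the diagonal near \<open>0\<close>, and, as
  \<open>F \<le> 1\<close>, the intermediate value theorem yields a positive fixed point. It is unique because
  \<open>tanh x / x\<close> is strictly decreasing on \<open>(0, \<infinity>)\<close>, which makes \<open>F p / p\<close> strictly decreasing.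
\<close>

lemma m0_bounds: "0 \<le> m0 bh \<and> m0 bh < 1"
proof -
  define A where "A = {m::real. m \<ge> 0 \<and> m = tanh (bh * m)}"
  have "closed A"
    unfolding A_def
    by (intro closed_Collect_conj closed_Collect_le closed_Collect_eq continuous_intros) auto
  moreover have "0 \<in> A"
    by (simp add: A_def)
  moreover have less_1: "m < 1" if "m \<in> A" for m
    using that tanh_real_lt_1[of "bh * m"] by (auto simp: A_def)
  then have "bdd_above A"
    by (meson bdd_above.unfold less_imp_le)
  ultimately have Sup_in: "Sup A \<in> A"
    using closed_contains_Sup by blast
  have "m0 bh = Sup A"
    unfolding m0_def
  proof (rule Greatest_equality)
    show "Sup A \<ge> 0 \<and> Sup A = tanh (bh * Sup A)"
      using Sup_in by (simp add: A_def)
    show "m \<le> Sup A" if "m \<ge> 0 \<and> m = tanh (bh * m)" for m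
      using that \<open>bdd_above A\<close> by (auto intro: cSup_upper simp: A_def)
  qed
  then show ?thesis
    using Sup_in less_1[OF Sup_in] by (simp add: A_def)
qed

lemma finite_spins: "finite (spins M)"
  unfolding spins_def by (intro finite_PiE) auto

lemma spins_cases: "s \<in> spins M \<Longrightarrow> \<mu> < M \<Longrightarrow> s \<mu> = 1 \<or> s \<mu> = -1"
  unfolding spins_def by (auto simp: PiE_iff)

lemma spin_weight_pos: "s \<in> spins M \<Longrightarrow> 0 < (\<Prod>\<mu><M. (1 + m0 bh * s \<mu>) / 2)"
  using spins_cases[of s M] m0_bounds[of bh] by (intro prod_pos) force

lemma avg_cmult: "avg M bh (\<lambda>s. c * f s) = c * avg M bh f"
  unfolding avg_def by (simp add: sum_distrib_left algebra_simps)

lemma avg_diff: "avg M bh (\<lambda>s. f s - g s) = avg M bh f - avg M bh g"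
  unfolding avg_def by (simp add: right_diff_distrib sum_subtractf)

lemma avg_sum: "avg M bh (\<lambda>s. \<Sum>i\<in>I. f i s) = (\<Sum>i\<in>I. avg M bh (f i))"
  unfolding avg_def by (simp add: sum_distrib_left sum.swap[of _ I])

lemma avg_cong: "(\<And>s. s \<in> spins M \<Longrightarrow> f s = g s) \<Longrightarrow> avg M bh f = avg M bh g"
  unfolding avg_def by (intro sum.cong) auto

lemma avg_mono: "(\<And>s. s \<in> spins M \<Longrightarrow> f s \<le> g s) \<Longrightarrow> avg M bh f \<le> avg M bh g"
  unfolding avg_def by (intro sum_mono mult_left_mono) (auto intro: less_imp_le spin_weight_pos)

lemma avg_pos:
  assumes "\<And>s. s \<in> spins M \<Longrightarrow> 0 \<le> f s" and "s0 \<in> spins M" and "0 < f s0"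
  shows "0 < avg M bh f"
  unfolding avg_def
proof (rule sum_pos2[OF finite_spins \<open>s0 \<in> spins M\<close>])
  show "0 < (\<Prod>\<mu><M. (1 + m0 bh * s0 \<mu>) / 2) * f s0"
    using assms spin_weight_pos by simp
  show "0 \<le> (\<Prod>\<mu><M. (1 + m0 bh * s \<mu>) / 2) * f s" if "s \<in> spins M" for s
    using that assms spin_weight_pos[OF that, of bh] by simp
qed

lemma has_real_derivative_avg:
  assumes "\<And>s. s \<in> spins M \<Longrightarrow> (f s has_real_derivative f' s) (at t)"
  shows "((\<lambda>t. avg M bh (\<lambda>s. f s t)) has_real_derivative avg M bh f') (at t)"
  unfolding avg_def by (intro DERIV_sum DERIV_cmult assms)

lemma avg_moment:
  assumes "J \<subseteq> {..<M}"
  shows "avg M bh (\<lambda>s. \<Prod>i\<in>J. s i) = m0 bh ^ card J"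
proof -
  define h where "h i x = (1 + m0 bh * x) / 2 * (if i \<in> J then x else 1)" for i and x :: real
  have restrict_J: "(\<Prod>i\<in>J. g i) = (\<Prod>i<M. if i \<in> J then g i else 1)" for g :: "nat \<Rightarrow> real"
    by (simp add: prod.If_cases Int_absorb2[OF assms] Int_commute)
  have "avg M bh (\<lambda>s. \<Prod>i\<in>J. s i) = (\<Sum>s\<in>spins M. \<Prod>i<M. h i (s i))"
    unfolding avg_def h_def restrict_J by (simp only: prod.distrib[symmetric])
  also have "\<dots> = (\<Prod>i<M. \<Sum>x\<in>{-1,1}. h i x)"
    unfolding spins_def by (rule prod_sum_PiE[symmetric]) auto
  also have "\<dots> = (\<Prod>i<M. if i \<in> J then m0 bh else 1)"
    by (intro prod.cong) (auto simp: h_def field_simps)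
  also have "\<dots> = m0 bh ^ card J"
    using restrict_J[of "\<lambda>_. m0 bh"] by simp
  finally show ?thesis .
qed

lemma avg_const: "avg M bh (\<lambda>_. c) = c"
  using avg_moment[of "{}" M bh] avg_cmult[of M bh c "\<lambda>_. 1"] by simp

lemma avg_spin_pair:
  assumes "\<mu> < M" and "\<nu> < M"
  shows "avg M bh (\<lambda>s. s \<mu> * s \<nu>) = (if \<mu> = \<nu> then 1 else m0 bh ^ 2)"
proof (cases "\<mu> = \<nu>")
  case True
  have "avg M bh (\<lambda>s. s \<mu> * s \<nu>) = avg M bh (\<lambda>_. 1)"
    using True spins_cases[OF _ assms(1)] by (intro avg_cong) force
  then show ?thesis
    using True avg_const by simp
next
  case False
  then have "avg M bh (\<lambda>s. s \<mu> * s \<nu>) = avg M bh (\<lambda>s. \<Prod>i\<in>{\<mu>,\<nu>}. s i)"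
    by simp
  also have "\<dots> = m0 bh ^ 2"
    using False assms by (subst avg_moment) (auto simp: power2_eq_square)
  finally show ?thesis
    using False by simp
qed

lemma avg_spin_times_total_spin:
  assumes "\<mu> < M"
  shows "avg M bh (\<lambda>s. s \<mu> * (\<Sum>\<nu><M. s \<nu>)) = 1 + (real M - 1) * m0 bh ^ 2"
proof -
  have "avg M bh (\<lambda>s. s \<mu> * (\<Sum>\<nu><M. s \<nu>)) = (\<Sum>\<nu><M. if \<mu> = \<nu> then 1 else m0 bh ^ 2)"
    using assms by (simp add: sum_distrib_left avg_sum avg_spin_pair)
  also have "\<dots> = (\<Sum>\<nu><M. m0 bh ^ 2 + (if \<mu> = \<nu> then 1 - m0 bh ^ 2 else 0))"
    by (intro sum.cong) auto
  also have "\<dots> = 1 + (real M - 1) * m0 bh ^ 2"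
    using assms by (simp add: sum.distrib algebra_simps)
  finally show ?thesis .
qed

lemma spins_permute:
  assumes "\<pi> permutes {..<M}" and "s \<in> spins M"
  shows "s \<circ> \<pi> \<in> spins M"
  using assms permutes_in_image[OF assms(1)] permutes_not_in[OF assms(1)]
  unfolding spins_def PiE_iff extensional_def by auto

lemma avg_permute:
  assumes "\<pi> permutes {..<M}"
  shows "avg M bh (\<lambda>s. f (s \<circ> \<pi>)) = avg M bh f"
proof -
  define w where "w s = (\<Prod>\<mu><M. (1 + m0 bh * s \<mu>) / 2)" for s :: "nat \<Rightarrow> real"
  have bij: "bij_betw (\<lambda>s. s \<circ> \<pi>) (spins M) (spins M)"
    using assms permutes_inv[OF assms]
    by (intro bij_betw_byWitness[where f' = "\<lambda>s. s \<circ> inv \<pi>"])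
       (auto simp: comp_assoc permutes_inv_o intro: spins_permute)
  have "w (s \<circ> \<pi>) = w s" for s
    unfolding w_def using prod.permute[OF assms, of "\<lambda>\<mu>. (1 + m0 bh * s \<mu>) / 2"]
    by (simp add: o_def)
  then have "avg M bh (\<lambda>s. f (s \<circ> \<pi>)) = (\<Sum>s\<in>spins M. w (s \<circ> \<pi>) * f (s \<circ> \<pi>))"
    unfolding avg_def w_def by simp
  also have "\<dots> = avg M bh f"
    unfolding avg_def w_def by (rule sum.reindex_bij_betw[OF bij])
  finally show ?thesis .
qed

lemma avg_exchangeable:
  assumes "\<mu> < M"
  shows "avg M bh (\<lambda>s. s \<mu> * F (\<Sum>\<nu><M. s \<nu>)) = avg M bh (\<lambda>s. s 0 * F (\<Sum>\<nu><M. s \<nu>))"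
proof -
  have swap: "Transposition.transpose 0 \<mu> permutes {..<M}"
    using assms by (intro permutes_swap_id) auto
  have "(\<Sum>\<nu><M. (s \<circ> Transposition.transpose 0 \<mu>) \<nu>) = (\<Sum>\<nu><M. s \<nu>)" for s :: "nat \<Rightarrow> real"
    using sum.permute[OF swap, of s] by simp
  then show ?thesis
    using avg_permute[OF swap, of bh "\<lambda>s. s 0 * F (\<Sum>\<nu><M. s \<nu>)"] by simp
qed

lemma avg_total_spin_times_fun:
  "avg M bh (\<lambda>s. (\<Sum>\<nu><M. s \<nu>) * F (\<Sum>\<nu><M. s \<nu>))
     = real M * avg M bh (\<lambda>s. s 0 * F (\<Sum>\<nu><M. s \<nu>))"
proof -
  have "avg M bh (\<lambda>s. (\<Sum>\<nu><M. s \<nu>) * F (\<Sum>\<nu><M. s \<nu>))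
      = (\<Sum>\<mu><M. avg M bh (\<lambda>s. s \<mu> * F (\<Sum>\<nu><M. s \<nu>)))"
    by (simp add: sum_distrib_right avg_sum)
  also have "\<dots> = (\<Sum>\<mu><M. avg M bh (\<lambda>s. s 0 * F (\<Sum>\<nu><M. s \<nu>)))"
    by (intro sum.cong refl avg_exchangeable) simp
  finally show ?thesis
    by simp
qed

lemma tanh_ratio_strict_decreasing:
  fixes x y :: real
  assumes "0 < x" and "x < y"
  shows "x * tanh y < y * tanh x"
proof -
  \<comment> \<open>concavity of tanh on \<open>[0, \<infinity>)\<close>, via two mean value steps\<close>
  have deriv: "(tanh has_real_derivative 1 - tanh t ^ 2) (at t)" for t :: real
    using has_field_derivative_tanh[OF _ DERIV_ident, of t] by simp
  obtain z where z: "x < z" "tanh y - tanh x = (y - x) * (1 - tanh z ^ 2)"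
    using MVT2[OF assms(2) deriv] by blast
  obtain e where e: "0 < e" "e < x" "tanh x = x * (1 - tanh e ^ 2)"
    using MVT2[OF assms(1) deriv] by auto
  have "0 < tanh e" "tanh e < tanh z"
    using e z tanh_real_strict_mono by (auto simp: strict_mono_def)
  then have "1 - tanh z ^ 2 < 1 - tanh e ^ 2"
    by (simp add: power_strict_mono)
  then have less: "x * (y - x) * (1 - tanh z ^ 2) < x * (y - x) * (1 - tanh e ^ 2)"
    using assms by (intro mult_strict_left_mono) auto
  have "x * tanh y = x * tanh x + x * ((y - x) * (1 - tanh z ^ 2))"
    unfolding z(2)[symmetric] by (simp add: algebra_simps)
  also have "\<dots> < x * tanh x + (y - x) * (x * (1 - tanh e ^ 2))"
    using less by (simp add: mult_ac)
  also have "\<dots> = y * tanh x"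
    unfolding e(3)[symmetric] by (simp add: algebra_simps)
  finally show ?thesis .
qed

lemma mult_tanh_scaled_less:
  fixes p q x :: real
  assumes "0 < p" and "p < q" and "x \<noteq> 0"
  shows "p * (x * tanh (q * x)) < q * (x * tanh (p * x))"
proof -
  have "p * (a * tanh (q * a)) < q * (a * tanh (p * a))" if "0 < a" for a
    using tanh_ratio_strict_decreasing[of "p * a" "q * a"] assms that
    by (simp add: mult_ac)
  from this[of "\<bar>x\<bar>"] show ?thesis
    using assms(3) by (cases "x > 0") (auto simp: tanh_minus)
qed

definition self_consistency :: "nat \<Rightarrow> real \<Rightarrow> real \<Rightarrow> real \<Rightarrow> real" where
  "self_consistency M bh b p = avg M bh (\<lambda>s. s 0 * tanh (b * p * (\<Sum>\<mu><M. s \<mu>)))"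

lemma self_consistency_0: "self_consistency M bh b 0 = 0"
  unfolding self_consistency_def using avg_const[of M bh 0] by simp

lemma self_consistency_le_1:
  assumes "0 < M"
  shows "self_consistency M bh b p \<le> 1"
proof -
  have "self_consistency M bh b p \<le> avg M bh (\<lambda>_. 1)"
    unfolding self_consistency_def
  proof (rule avg_mono)
    fix s assume "s \<in> spins M"
    then have "s 0 = 1 \<or> s 0 = -1"
      using spins_cases assms by blast
    then show "s 0 * tanh (b * p * (\<Sum>\<mu><M. s \<mu>)) \<le> 1"
      using tanh_real_lt_1 tanh_real_gt_neg1 by (auto intro: less_imp_le)
  qed
  then show ?thesis
    by (simp add: avg_const)
qed

lemma continuous_on_self_consistency: "continuous_on A (self_consistency M bh b)"
  unfolding self_consistency_def avg_def by (intro continuous_intros) simp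

lemma has_real_derivative_self_consistency_0:
  assumes "0 < M"
  shows "(self_consistency M bh b has_real_derivative b * (1 + (real M - 1) * m0 bh ^ 2)) (at 0)"
proof -
  have "(self_consistency M bh b has_real_derivative
      avg M bh (\<lambda>s. s 0 * (b * (\<Sum>\<mu><M. s \<mu>)))) (at 0)"
    unfolding self_consistency_def
    by (intro has_real_derivative_avg) (auto intro!: derivative_eq_intros)
  moreover have "avg M bh (\<lambda>s. s 0 * (b * (\<Sum>\<mu><M. s \<mu>))) = b * (1 + (real M - 1) * m0 bh ^ 2)"
    using avg_cmult[of M bh b "\<lambda>s. s 0 * (\<Sum>\<mu><M. s \<mu>)"] avg_spin_times_total_spin[OF assms]
    by (simp add: mult_ac)
  ultimately show ?thesis
    by simp
qed

lemma self_consistency_above_diagonal_near_0: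
  assumes "0 < M" and "1 < b * (1 + (real M - 1) * m0 bh ^ 2)"
  obtains d where "0 < d" and "\<And>t. 0 < t \<Longrightarrow> t < d \<Longrightarrow> t < self_consistency M bh b t"
proof -
  have "((\<lambda>t. self_consistency M bh b t - t) has_real_derivative
      b * (1 + (real M - 1) * m0 bh ^ 2) - 1) (at 0)"
    using DERIV_diff[OF has_real_derivative_self_consistency_0[OF assms(1)] DERIV_ident] by simp
  from DERIV_pos_inc_right[OF this] assms(2) obtain d where
    "0 < d" "\<And>t. 0 < t \<Longrightarrow> t < d \<Longrightarrow> self_consistency M bh b 0 - 0 < self_consistency M bh b t - t"
    by auto
  then show thesis
    using that self_consistency_0 by simp
qed

lemma self_consistency_fixed_point_exists:
  assumes "0 < M" and "1 < b * (1 + (real M - 1) * m0 bh ^ 2)"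
  shows "\<exists>p > 0. self_consistency M bh b p = p"
proof -
  obtain d where "0 < d" and above: "\<And>t. 0 < t \<Longrightarrow> t < d \<Longrightarrow> t < self_consistency M bh b t"
    using self_consistency_above_diagonal_near_0[OF assms] by blast
  define t where "t = min (d / 2) 1"
  have t: "0 < t" "t \<le> 2" "0 \<le> self_consistency M bh b t - t"
    using \<open>0 < d\<close> above[of t] by (auto simp: t_def min_less_iff_disj)
  have "self_consistency M bh b 2 - 2 \<le> 0"
    using self_consistency_le_1[OF assms(1), of bh b 2] by simp
  moreover have "continuous_on {t..2} (\<lambda>p. self_consistency M bh b p - p)"
    by (intro continuous_intros continuous_on_self_consistency)
  ultimately obtain p where "t \<le> p" "self_consistency M bh b p - p = 0"
    using IVT2'[of "\<lambda>p. self_consistency M bh b p - p" 2 0 t] t by auto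
  then show ?thesis
    using t(1) by (intro exI[of _ p]) auto
qed

lemma self_consistency_ratio_strict_decreasing:
  assumes "0 < M" and "0 < b" and "0 < p" and "p < q"
  shows "p * self_consistency M bh b q < q * self_consistency M bh b p"
proof -
  define \<phi> where "\<phi> x = q * (x * tanh (b * p * x)) - p * (x * tanh (b * q * x))" for x :: real
  have \<phi>_pos: "0 < \<phi> x" if "x \<noteq> 0" for x
  proof -
    have "b * (p * (x * tanh (q * (b * x)))) < b * (q * (x * tanh (p * (b * x))))"
      using mult_tanh_scaled_less[of p q "b * x"] assms that by (simp add: mult_ac)
    then show ?thesis
      using assms(2) by (simp add: \<phi>_def mult_ac)
  qed
  have \<phi>_nonneg: "0 \<le> \<phi> x" for x
    using \<phi>_pos[of x] by (cases "x = 0") (auto simp: \<phi>_def)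
  define ones :: "nat \<Rightarrow> real" where "ones = restrict (\<lambda>_. 1) {..<M}"
  have ones: "ones \<in> spins M" "(\<Sum>\<nu><M. ones \<nu>) = real M"
    by (auto simp: ones_def spins_def)
  have "real M * (q * self_consistency M bh b p - p * self_consistency M bh b q)
      = avg M bh (\<lambda>s. \<phi> (\<Sum>\<nu><M. s \<nu>))"
    using avg_total_spin_times_fun[of M bh "\<lambda>x. tanh (b * p * x)"]
      avg_total_spin_times_fun[of M bh "\<lambda>x. tanh (b * q * x)"]
    by (simp add: \<phi>_def self_consistency_def avg_diff avg_cmult algebra_simps)
  also have "\<dots> > 0"
    using ones assms(1) by (intro avg_pos[of M _ ones] \<phi>_nonneg \<phi>_pos) auto
  finally show ?thesis
    using assms(1) by (simp add: zero_less_mult_iff)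
qed

lemma self_consistency_fixed_point_unique:
  assumes "0 < M" and "0 < b" and "0 < p" and "0 < q"
    and "self_consistency M bh b p = p" and "self_consistency M bh b q = q"
  shows "p = q"
proof (rule ccontr)
  assume "p \<noteq> q"
  then consider "p < q" | "q < p"
    by linarith
  then show False
    using self_consistency_ratio_strict_decreasing[of M b p q bh]
      self_consistency_ratio_strict_decreasing[of M b q p bh] assms
    by cases (simp_all add: mult.commute)
qed

lemma self_consistency_vector_solution:
  assumes "self_consistency M bh b p = p" and "\<sigma> \<in> {1, -1}" and "\<mu> < M"
  shows "\<sigma> * p = avg M bh (\<lambda>s. s \<mu> * tanh (b * (\<Sum>\<nu><M. s \<nu> * (\<sigma> * p))))"
proof -
  have field: "b * (\<Sum>\<nu><M. s \<nu> * (\<sigma> * p)) = \<sigma> * (b * p * (\<Sum>\<nu><M. s \<nu>))" for s :: "nat \<Rightarrow> real"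
    by (simp add: sum_distrib_left[symmetric] sum_distrib_right[symmetric] mult_ac)
  have "tanh (\<sigma> * x) = \<sigma> * tanh x" for x
    using assms(2) by (auto simp: tanh_minus)
  then have "tanh (b * (\<Sum>\<nu><M. s \<nu> * (\<sigma> * p))) = \<sigma> * tanh (b * p * (\<Sum>\<nu><M. s \<nu>))" for s
    unfolding field .
  then have "avg M bh (\<lambda>s. s \<mu> * tanh (b * (\<Sum>\<nu><M. s \<nu> * (\<sigma> * p))))
      = \<sigma> * avg M bh (\<lambda>s. s \<mu> * tanh (b * p * (\<Sum>\<nu><M. s \<nu>)))"
    by (simp add: avg_cmult[symmetric] mult_ac)
  also have "\<dots> = \<sigma> * p"
    using avg_exchangeable[OF assms(3), of bh "\<lambda>x. tanh (b * p * x)"] assms(1)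
    by (simp add: self_consistency_def)
  finally show ?thesis ..
qed

lemma has_real_derivative_gfun_const:
  "((\<lambda>t. gfun M bh b (\<lambda>_. t)) has_real_derivative b * real M * (self_consistency M bh b t - t)) (at t)"
proof -
  have gfun_const: "gfun M bh b (\<lambda>_. t) = ln 2 - b * (real M * t ^ 2) / 2
      + avg M bh (\<lambda>s. ln (cosh (b * t * (\<Sum>\<nu><M. s \<nu>))))" for t
  proof -
    have field: "b * (\<Sum>\<nu><M. s \<nu> * t) = b * t * (\<Sum>\<nu><M. s \<nu>)" for s :: "nat \<Rightarrow> real"
      by (simp add: sum_distrib_left[symmetric] sum_distrib_right[symmetric] mult_ac)
    show ?thesis
      unfolding gfun_def field by simp
  qed
  have "((\<lambda>t. avg M bh (\<lambda>s. ln (cosh (b * t * (\<Sum>\<nu><M. s \<nu>))))) has_real_derivative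
      avg M bh (\<lambda>s. b * ((\<Sum>\<nu><M. s \<nu>) * tanh (b * t * (\<Sum>\<nu><M. s \<nu>))))) (at t)"
    by (intro has_real_derivative_avg) (auto intro!: derivative_eq_intros simp: tanh_def field_simps)
  moreover have "avg M bh (\<lambda>s. b * ((\<Sum>\<nu><M. s \<nu>) * tanh (b * t * (\<Sum>\<nu><M. s \<nu>))))
      = b * real M * self_consistency M bh b t"
    using avg_total_spin_times_fun[of M bh "\<lambda>x. tanh (b * t * x)"]
    by (simp add: avg_cmult self_consistency_def)
  ultimately show ?thesis
    unfolding gfun_const by (auto intro!: derivative_eq_intros simp: algebra_simps)
qed

lemma gfun_not_maximal_at_0:
  assumes "0 < M" and "0 < b" and "1 < b * (1 + (real M - 1) * m0 bh ^ 2)"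
  shows "\<exists>p. gfun M bh b (\<lambda>_. 0) < gfun M bh b p"
proof -
  obtain d where "0 < d" and above: "\<And>t. 0 < t \<Longrightarrow> t < d \<Longrightarrow> t < self_consistency M bh b t"
    using self_consistency_above_diagonal_near_0[OF assms(1,3)] by blast
  then have "0 < d / 2"
    by simp
  from MVT2[OF this has_real_derivative_gfun_const[of M bh b]] obtain z where z: "0 < z" "z < d / 2" and
    "gfun M bh b (\<lambda>_. d / 2) - gfun M bh b (\<lambda>_. 0) = d / 2 * (b * real M * (self_consistency M bh b z - z))"
    by auto
  moreover have "0 < d / 2 * (b * real M * (self_consistency M bh b z - z))"
    using z above[of z] assms(1,2) by simp
  ultimately show ?thesis
    by (intro exI[of _ "\<lambda>_. d / 2"]) simp
qed

theorem mainTheorem7: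
  fixes M :: nat and b bh :: real
  assumes "M \<ge> 1" and "b > 0" and "bh > 0"
    and "1 / b < 1 + (real M - 1) * (m0 bh)^2"
  shows "(\<exists>p :: nat \<Rightarrow> real. gfun M bh b p > gfun M bh b (\<lambda>_. 0))
    \<and> (\<exists>!pb :: real. pb > 0 \<and> pb = avg M bh (\<lambda>s. s 0 * tanh (b * pb * (\<Sum>\<mu><M. s \<mu>))))
    \<and> (\<forall>pb :: real. pb > 0 \<and> pb = avg M bh (\<lambda>s. s 0 * tanh (b * pb * (\<Sum>\<mu><M. s \<mu>)))
        \<longrightarrow> (\<forall>\<sigma> \<in> {1, -1::real}. \<forall>\<mu><M.
              \<sigma> * pb = avg M bh (\<lambda>s. s \<mu> * tanh (b * (\<Sum>\<nu><M. s \<nu> * (\<sigma> * pb))))))"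
proof -
  have M: "0 < M"
    using assms(1) by simp
  have slope: "1 < b * (1 + (real M - 1) * m0 bh ^ 2)"
    using assms(2,4) by (simp add: divide_less_eq mult.commute)
  obtain pb where "pb > 0" "self_consistency M bh b pb = pb"
    using self_consistency_fixed_point_exists[OF M slope] by blast
  then have "\<exists>!pb. pb > 0 \<and> self_consistency M bh b pb = pb"
    using self_consistency_fixed_point_unique[OF M assms(2)] by blast
  moreover have "pb = avg M bh (\<lambda>s. s 0 * tanh (b * pb * (\<Sum>\<mu><M. s \<mu>)))
      \<longleftrightarrow> self_consistency M bh b pb = pb" for pb
    by (auto simp: self_consistency_def)
  ultimately show ?thesis
    using gfun_not_maximal_at_0[OF M assms(2) slope] self_consistency_vector_solution
    by simp
qed

end
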